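(* Let $\mathcal V$ be braided monoidal closed, $H$ a Hopf $\mathcal V$-category with invertible antipode $s$, and $t$ a non-singular left integral family for $H$. Let $x\in X$ and let $f_x,g_x\colon H_{x,x}\to I$ be morphisms such that $$(1\otimes f_x)\circ\delta_{xx}\circ t^{xx}=j_x\quad\text{and}\quad (g_x\otimes1)\circ\delta_{xx}\circ t^{xx}=j_x .$$ Then $g_x=f_x\circ s_{xx}^{-1}$. In particular, if $\bar p_x$ is a right inverse of $p_{xx}$ and $\bar q_x$ a right inverse of $q_{xx}$, then $$\mathrm{ev}_{xx}\circ(\bar p_x\otimes1)\circ(j_x\otimes1)=\mathrm{ev}_{xx}\circ\sigma_{H_{x,x},H^*_{x,x}}\circ(1\otimes\bar q_x)\circ(1\otimes j_x)\circ s_{xx}^{-1}\colon H_{x,x}\to I.$$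
   Context: $\mathcal V$ is a braided monoidal category with tensor $\otimes$, unit $I$, braiding $\sigma$ (unit constraints suppressed), which is closed; $A^*_{x,y}:=[A_{x,y},I]$ with evaluation $\mathrm{ev}_{xy}\colon A^*_{x,y}\otimes A_{x,y}\to I$. A $\mathcal V$-category $A$ with object set $X$ has objects $A_{x,y}$, compositions $m_{xyz}\colon A_{x,y}\otimes A_{y,z}\to A_{x,z}$, units $j_x\colon I\to A_{x,x}$, associative and unital. Semi-Hopf: each $A_{x,y}$ is a comonoid $(\delta_{xy},\epsilon_{xy})$ and all $m_{xyz},j_x$ are comonoid morphisms. Hopf: there are $s_{xy}\colon A_{x,y}\to A_{y,x}$ with $m_{xyx}\circ(1\otimes s_{xy})\circ\delta_{xy}=j_x\circ\epsilon_{xy}$ and $m_{yxy}\circ(s_{xy}\otimes1)\circ\delta_{xy}=j_y\circ\epsilon_{xy}$; invertible antipode means each $s_{xy}$ is an isomorphism. Left integral family: $t^{xy}\colon I\to A_{x,y}$ with $m_{zxy}\circ(1\otimes t^{xy})=t^{zy}\circ\epsilon_{zx}$ for all $x,y,z$. For such $t$: $p_{xy}:=(\mathrm{ev}_{xy}\otimes1)\circ(1\otimes\delta_{xy})\circ(1\otimes t^{xy})\colon A^*_{x,y}\to A_{x,y}$ and $q_{xy}:=(1\otimes\mathrm{ev}_{xy})\circ(1\otimes\sigma_{A_{x,y},A^*_{x,y}})\circ(\delta_{xy}\otimes1)\circ(t^{xy}\otimes1)\colon A^*_{x,y}\to A_{x,y}$. $t$ is non-singular if all $p_{xx}$ and all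 $q_{xx}$ ($x\in X$) are split epimorphisms. *)

theory Defs
  imports Main
begin

text \<open>A monoidal category presented by explicit data: objects of type 'o, morphisms of
type 'm (every element of 'm is a morphism with domain dm and codomain cd),
composition cp g f = g o f, identities, tensor on objects (ot) and morphisms (tm),
unit object U, associator aso (inverse asoi), left/right unitors lu/ru (inverses lui/rui),
braiding br (inverse bri), internal hom ih with evaluation ev : ih a b (x) a -> b.\<close>

record ('o, 'm) bmcc =
  dm :: "'m \<Rightarrow> 'o"
  cd :: "'m \<Rightarrow> 'o"
  cp :: "'m \<Rightarrow> 'm \<Rightarrow> 'm"
  ident :: "'o \<Rightarrow> 'm"
  ot :: "'o \<Rightarrow> 'o \<Rightarrow> 'o"
  tm :: "'m \<Rightarrow> 'm \<Rightarrow> 'm"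
  U :: "'o"
  aso :: "'o \<Rightarrow> 'o \<Rightarrow> 'o \<Rightarrow> 'm"
  asoi :: "'o \<Rightarrow> 'o \<Rightarrow> 'o \<Rightarrow> 'm"
  lu :: "'o \<Rightarrow> 'm"
  lui :: "'o \<Rightarrow> 'm"
  ru :: "'o \<Rightarrow> 'm"
  rui :: "'o \<Rightarrow> 'm"
  br :: "'o \<Rightarrow> 'o \<Rightarrow> 'm"
  bri :: "'o \<Rightarrow> 'o \<Rightarrow> 'm"
  ih :: "'o \<Rightarrow> 'o \<Rightarrow> 'o"
  ev :: "'o \<Rightarrow> 'o \<Rightarrow> 'm"

definition hom :: "('o,'m) bmcc \<Rightarrow> 'm \<Rightarrow> 'o \<Rightarrow> 'o \<Rightarrow> bool" where
  "hom C f a b \<longleftrightarrow> dm C f = a \<and> cd C f = b"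

definition is_inverse :: "('o,'m) bmcc \<Rightarrow> 'm \<Rightarrow> 'm \<Rightarrow> 'o \<Rightarrow> 'o \<Rightarrow> bool" where
  "is_inverse C f g a b \<longleftrightarrow> hom C f a b \<and> hom C g b a \<and>
     cp C g f = ident C a \<and> cp C f g = ident C b"

definition category :: "('o,'m) bmcc \<Rightarrow> bool" where
  "category C \<longleftrightarrow>
    (\<forall>a. hom C (ident C a) a a) \<and>
    (\<forall>f g. cd C f = dm C g \<longrightarrow> hom C (cp C g f) (dm C f) (cd C g)) \<and>
    (\<forall>f. cp C f (ident C (dm C f)) = f \<and> cp C (ident C (cd C f)) f = f) \<and>
    (\<forall>f g h. cd C f = dm C g \<and> cd C g = dm C h \<longrightarrow>
        cp C h (cp C g f) = cp C (cp C h g) f)"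

definition monoidal :: "('o,'m) bmcc \<Rightarrow> bool" where
  "monoidal C \<longleftrightarrow> category C \<and>
    (\<forall>f g. hom C (tm C f g) (ot C (dm C f) (dm C g)) (ot C (cd C f) (cd C g))) \<and>
    (\<forall>a b. tm C (ident C a) (ident C b) = ident C (ot C a b)) \<and>
    (\<forall>f g f' g'. cd C f = dm C g \<and> cd C f' = dm C g' \<longrightarrow>
        tm C (cp C g f) (cp C g' f') = cp C (tm C g g') (tm C f f')) \<and>
    (\<forall>a b c. is_inverse C (aso C a b c) (asoi C a b c)
                (ot C (ot C a b) c) (ot C a (ot C b c))) \<and>
    (\<forall>a. is_inverse C (lu C a) (lui C a) (ot C (U C) a) a) \<and>
    (\<forall>a. is_inverse C (ru C a) (rui C a) (ot C a (U C)) a) \<and>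
    (\<forall>f g h. cp C (aso C (cd C f) (cd C g) (cd C h)) (tm C (tm C f g) h) =
             cp C (tm C f (tm C g h)) (aso C (dm C f) (dm C g) (dm C h))) \<and>
    (\<forall>f. cp C (lu C (cd C f)) (tm C (ident C (U C)) f) = cp C f (lu C (dm C f))) \<and>
    (\<forall>f. cp C (ru C (cd C f)) (tm C f (ident C (U C))) = cp C f (ru C (dm C f))) \<and>
    (\<forall>a b c d.
       cp C (aso C a b (ot C c d)) (aso C (ot C a b) c d) =
       cp C (tm C (ident C a) (aso C b c d))
         (cp C (aso C a (ot C b c) d) (tm C (aso C a b c) (ident C d)))) \<and>
    (\<forall>a b. cp C (tm C (ident C a) (lu C b)) (aso C a (U C) b) = tm C (ru C a) (ident C b))"

definition braided :: "('o,'m) bmcc \<Rightarrow> bool" where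
  "braided C \<longleftrightarrow> monoidal C \<and>
    (\<forall>a b. is_inverse C (br C a b) (bri C a b) (ot C a b) (ot C b a)) \<and>
    (\<forall>f g. cp C (br C (cd C f) (cd C g)) (tm C f g) =
           cp C (tm C g f) (br C (dm C f) (dm C g))) \<and>
    (\<forall>a b c.
       cp C (aso C b c a) (cp C (br C a (ot C b c)) (aso C a b c)) =
       cp C (tm C (ident C b) (br C a c))
         (cp C (aso C b a c) (tm C (br C a b) (ident C c)))) \<and>
    (\<forall>a b c.
       cp C (asoi C c a b) (cp C (br C (ot C a b) c) (asoi C a b c)) =
       cp C (tm C (br C a c) (ident C b))
         (cp C (asoi C a c b) (tm C (ident C a) (br C b c))))"

definition closed :: "('o,'m) bmcc \<Rightarrow> bool" where
  "closed C \<longleftrightarrow>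
    (\<forall>a b. hom C (ev C a b) (ot C (ih C a b) a) b \<and>
       (\<forall>c f. hom C f (ot C c a) b \<longrightarrow>
          (\<exists>!g. hom C g c (ih C a b) \<and> cp C (ev C a b) (tm C g (ident C a)) = f)))"

definition comonoid :: "('o,'m) bmcc \<Rightarrow> 'o \<Rightarrow> 'm \<Rightarrow> 'm \<Rightarrow> bool" where
  "comonoid C a d e \<longleftrightarrow> hom C d a (ot C a a) \<and> hom C e a (U C) \<and>
    cp C (aso C a a a) (cp C (tm C d (ident C a)) d) = cp C (tm C (ident C a) d) d \<and>
    cp C (lu C a) (cp C (tm C e (ident C a)) d) = ident C a \<and>
    cp C (ru C a) (cp C (tm C (ident C a) e) d) = ident C a"

text \<open>middle-four interchange (a(x)a)(x)(b(x)b) -> (a(x)b)(x)(a(x)b)\<close>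
definition mid4 :: "('o,'m) bmcc \<Rightarrow> 'o \<Rightarrow> 'o \<Rightarrow> 'm" where
  "mid4 C a b =
    cp C (asoi C a b (ot C a b))
     (cp C (tm C (ident C a) (aso C b a b))
      (cp C (tm C (ident C a) (tm C (br C a b) (ident C b)))
       (cp C (tm C (ident C a) (asoi C a b b))
             (aso C a a (ot C b b)))))"

definition tens_comult :: "('o,'m) bmcc \<Rightarrow> 'o \<Rightarrow> 'o \<Rightarrow> 'm \<Rightarrow> 'm \<Rightarrow> 'm" where
  "tens_comult C a b da db = cp C (mid4 C a b) (tm C da db)"

definition tens_counit :: "('o,'m) bmcc \<Rightarrow> 'm \<Rightarrow> 'm \<Rightarrow> 'm" where
  "tens_counit C ea eb = cp C (lu C (U C)) (tm C ea eb)"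

definition comonoid_mor :: "('o,'m) bmcc \<Rightarrow> 'm \<Rightarrow> 'o \<Rightarrow> 'm \<Rightarrow> 'm \<Rightarrow> 'o \<Rightarrow> 'm \<Rightarrow> 'm \<Rightarrow> bool" where
  "comonoid_mor C f a da ea b db eb \<longleftrightarrow> hom C f a b \<and>
     cp C db f = cp C (tm C f f) da \<and> cp C eb f = ea"

text \<open>V-categories with object set the type 'x.\<close>

definition vcat :: "('o,'m) bmcc \<Rightarrow> ('x \<Rightarrow> 'x \<Rightarrow> 'o) \<Rightarrow> ('x \<Rightarrow> 'x \<Rightarrow> 'x \<Rightarrow> 'm) \<Rightarrow> ('x \<Rightarrow> 'm) \<Rightarrow> bool" where
  "vcat C A m j \<longleftrightarrow>
    (\<forall>x y z. hom C (m x y z) (ot C (A x y) (A y z)) (A x z)) \<and>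
    (\<forall>x. hom C (j x) (U C) (A x x)) \<and>
    (\<forall>w x y z. cp C (m w y z) (tm C (m w x y) (ident C (A y z))) =
        cp C (m w x z) (cp C (tm C (ident C (A w x)) (m x y z)) (aso C (A w x) (A x y) (A y z)))) \<and>
    (\<forall>x y. cp C (m x x y) (tm C (j x) (ident C (A x y))) = lu C (A x y)) \<and>
    (\<forall>x y. cp C (m x y y) (tm C (ident C (A x y)) (j y)) = ru C (A x y))"

definition semi_hopf :: "('o,'m) bmcc \<Rightarrow> ('x \<Rightarrow> 'x \<Rightarrow> 'o) \<Rightarrow> ('x \<Rightarrow> 'x \<Rightarrow> 'x \<Rightarrow> 'm) \<Rightarrow> ('x \<Rightarrow> 'm)
    \<Rightarrow> ('x \<Rightarrow> 'x \<Rightarrow> 'm) \<Rightarrow> ('x \<Rightarrow> 'x \<Rightarrow> 'm) \<Rightarrow> bool" where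
  "semi_hopf C A m j dl ep \<longleftrightarrow> vcat C A m j \<and>
    (\<forall>x y. comonoid C (A x y) (dl x y) (ep x y)) \<and>
    (\<forall>x y z. comonoid_mor C (m x y z)
        (ot C (A x y) (A y z)) (tens_comult C (A x y) (A y z) (dl x y) (dl y z))
           (tens_counit C (ep x y) (ep y z))
        (A x z) (dl x z) (ep x z)) \<and>
    (\<forall>x. comonoid_mor C (j x) (U C) (lui C (U C)) (ident C (U C)) (A x x) (dl x x) (ep x x))"

definition hopf :: "('o,'m) bmcc \<Rightarrow> ('x \<Rightarrow> 'x \<Rightarrow> 'o) \<Rightarrow> ('x \<Rightarrow> 'x \<Rightarrow> 'x \<Rightarrow> 'm) \<Rightarrow> ('x \<Rightarrow> 'm)
    \<Rightarrow> ('x \<Rightarrow> 'x \<Rightarrow> 'm) \<Rightarrow> ('x \<Rightarrow> 'x \<Rightarrow> 'm) \<Rightarrow> ('x \<Rightarrow> 'x \<Rightarrow> 'm) \<Rightarrow> bool" where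
  "hopf C A m j dl ep s \<longleftrightarrow> semi_hopf C A m j dl ep \<and>
    (\<forall>x y. hom C (s x y) (A x y) (A y x)) \<and>
    (\<forall>x y. cp C (m x y x) (cp C (tm C (ident C (A x y)) (s x y)) (dl x y)) = cp C (j x) (ep x y)) \<and>
    (\<forall>x y. cp C (m y x y) (cp C (tm C (s x y) (ident C (A x y))) (dl x y)) = cp C (j y) (ep x y))"

definition left_integral_family :: "('o,'m) bmcc \<Rightarrow> ('x \<Rightarrow> 'x \<Rightarrow> 'o) \<Rightarrow> ('x \<Rightarrow> 'x \<Rightarrow> 'x \<Rightarrow> 'm)
    \<Rightarrow> ('x \<Rightarrow> 'x \<Rightarrow> 'm) \<Rightarrow> ('x \<Rightarrow> 'x \<Rightarrow> 'm) \<Rightarrow> bool" where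
  "left_integral_family C A m ep t \<longleftrightarrow>
    (\<forall>x y. hom C (t x y) (U C) (A x y)) \<and>
    (\<forall>x y z. cp C (m z x y) (cp C (tm C (ident C (A z x)) (t x y)) (rui C (A z x))) =
             cp C (t z y) (ep z x))"

definition dual :: "('o,'m) bmcc \<Rightarrow> 'o \<Rightarrow> 'o" where
  "dual C a = ih C a (U C)"

definition pmap :: "('o,'m) bmcc \<Rightarrow> ('x \<Rightarrow> 'x \<Rightarrow> 'o) \<Rightarrow> ('x \<Rightarrow> 'x \<Rightarrow> 'm) \<Rightarrow> ('x \<Rightarrow> 'x \<Rightarrow> 'm)
    \<Rightarrow> 'x \<Rightarrow> 'x \<Rightarrow> 'm" where
  "pmap C A dl t x y =
    (let a = A x y; as = dual C a in
     cp C (lu C a)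
      (cp C (tm C (ev C a (U C)) (ident C a))
       (cp C (asoi C as a a)
        (cp C (tm C (ident C as) (dl x y))
         (cp C (tm C (ident C as) (t x y)) (rui C as))))))"

definition qmap :: "('o,'m) bmcc \<Rightarrow> ('x \<Rightarrow> 'x \<Rightarrow> 'o) \<Rightarrow> ('x \<Rightarrow> 'x \<Rightarrow> 'm) \<Rightarrow> ('x \<Rightarrow> 'x \<Rightarrow> 'm)
    \<Rightarrow> 'x \<Rightarrow> 'x \<Rightarrow> 'm" where
  "qmap C A dl t x y =
    (let a = A x y; as = dual C a in
     cp C (ru C a)
      (cp C (tm C (ident C a) (ev C a (U C)))
       (cp C (tm C (ident C a) (br C a as))
        (cp C (aso C a a as)
         (cp C (tm C (dl x y) (ident C as))
          (cp C (tm C (t x y) (ident C as)) (lui C as)))))))"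

definition right_inverse :: "('o,'m) bmcc \<Rightarrow> 'm \<Rightarrow> 'm \<Rightarrow> bool" where
  "right_inverse C r f \<longleftrightarrow> hom C r (cd C f) (dm C f) \<and> cp C f r = ident C (cd C f)"

definition split_epi :: "('o,'m) bmcc \<Rightarrow> 'm \<Rightarrow> bool" where
  "split_epi C f \<longleftrightarrow> (\<exists>r. right_inverse C r f)"

definition nonsingular :: "('o,'m) bmcc \<Rightarrow> ('x \<Rightarrow> 'x \<Rightarrow> 'o) \<Rightarrow> ('x \<Rightarrow> 'x \<Rightarrow> 'm)
    \<Rightarrow> ('x \<Rightarrow> 'x \<Rightarrow> 'm) \<Rightarrow> bool" where
  "nonsingular C A dl t \<longleftrightarrow>
    (\<forall>x. split_epi C (pmap C A dl t x x) \<and> split_epi C (qmap C A dl t x x))"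

end

theory Submission
  imports Defs
begin

text \<open>Write \<open>t\<^sub>1 \<otimes> t\<^sub>2\<close> for the coproduct of the integral \<open>t = t\<^sup>x\<^sup>x\<close> of \<open>H = H\<^sub>x\<^sub>,\<^sub>x\<close>.
  Pushing the integral property \<open>h t = \<epsilon>(h) t\<close> through the coproduct and cancelling with the
  antipode gives \<open>S(h) t\<^sub>1 \<otimes> t\<^sub>2 = t\<^sub>1 \<otimes> h t\<^sub>2\<close>. Applying \<open>g \<otimes> f\<close> and using the
  normalisations \<open>t\<^sub>1 f(t\<^sub>2) = 1 = g(t\<^sub>1) t\<^sub>2\<close>, the left side becomes \<open>g(S h)\<close> and the right side
  \<open>f(h)\<close>; hence \<open>g \<circ> S = f\<close>. For the second claim, \<open>p \<circ> p\<^sup>- = 1\<close> and \<open>q \<circ> q\<^sup>- = 1\<close>, evaluated at the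
  unit \<open>j\<^sub>x\<close>, say precisely that the functionals obtained by pairing \<open>p\<^sup>-(1)\<close> and \<open>q\<^sup>-(1)\<close>
  with \<open>H\<close> are normalised in this sense.\<close>

section \<open>Monoidal and braided coherence\<close>

locale monoidal_category =
  fixes C :: "('o,'m) bmcc"
  assumes monoidal: "monoidal C"
begin

text \<open>Morphisms are untyped elements of \<open>'m\<close>, so every rewrite carries domain/codomain side
  conditions; simp discharges them from the typing facts declared [simp] below. Composites are
  kept right-nested, and \<open>comp_eq_extend\<close> applies an equation \<open>g \<bullet> f = k\<close> inside such a nest.\<close>

abbreviation comp (infixr "\<bullet>" 55) where "g \<bullet> f \<equiv> cp C g f"
abbreviation tensor (infixr "\<otimes>" 60) where "f \<otimes> g \<equiv> tm C f g"
abbreviation otensor (infixr "\<odot>" 60) where "a \<odot> b \<equiv> ot C a b"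
abbreviation "idm \<equiv> ident C"
abbreviation "\<I> \<equiv> U C"
abbreviation "DM \<equiv> dm C"
abbreviation "CD \<equiv> cd C"

lemma category: "category C"
  using monoidal monoidal_def by auto

lemma dm_ident[simp]: "DM (idm a) = a" and cd_ident[simp]: "CD (idm a) = a"
  using category unfolding category_def hom_def by auto

lemma dm_comp[simp]: "CD f = DM g \<Longrightarrow> DM (g \<bullet> f) = DM f"
  and cd_comp[simp]: "CD f = DM g \<Longrightarrow> CD (g \<bullet> f) = CD g"
  using category unfolding category_def hom_def by auto

lemma comp_ident_left[simp]: "CD f = b \<Longrightarrow> idm b \<bullet> f = f"
  and comp_ident_right[simp]: "DM f = a \<Longrightarrow> f \<bullet> idm a = f"
  using category unfolding category_def by auto

lemma comp_assoc[simp]: "CD f = DM g \<Longrightarrow> CD g = DM h \<Longrightarrow> (h \<bullet> g) \<bullet> f = h \<bullet> (g \<bullet> f)"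
  using category unfolding category_def by metis

lemma dm_tensor[simp]: "DM (f \<otimes> g) = DM f \<odot> DM g" and cd_tensor[simp]: "CD (f \<otimes> g) = CD f \<odot> CD g"
  using monoidal unfolding monoidal_def hom_def by auto

lemma tensor_ident[simp]: "idm a \<otimes> idm b = idm (a \<odot> b)"
  using monoidal unfolding monoidal_def by auto

lemma interchange: "CD f = DM g \<Longrightarrow> CD f' = DM g' \<Longrightarrow> (g \<bullet> f) \<otimes> (g' \<bullet> f') = (g \<otimes> g') \<bullet> (f \<otimes> f')"
  using monoidal unfolding monoidal_def by auto

lemma aso_iso: "DM (aso C a b c) = (a \<odot> b) \<odot> c" "CD (aso C a b c) = a \<odot> (b \<odot> c)"
  "DM (asoi C a b c) = a \<odot> (b \<odot> c)" "CD (asoi C a b c) = (a \<odot> b) \<odot> c"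
  "asoi C a b c \<bullet> aso C a b c = idm ((a \<odot> b) \<odot> c)" "aso C a b c \<bullet> asoi C a b c = idm (a \<odot> (b \<odot> c))"
  using monoidal unfolding monoidal_def is_inverse_def hom_def by auto

lemma lu_iso: "DM (lu C a) = \<I> \<odot> a" "CD (lu C a) = a" "DM (lui C a) = a" "CD (lui C a) = \<I> \<odot> a"
  "lui C a \<bullet> lu C a = idm (\<I> \<odot> a)" "lu C a \<bullet> lui C a = idm a"
  using monoidal unfolding monoidal_def is_inverse_def hom_def by auto

lemma ru_iso: "DM (ru C a) = a \<odot> \<I>" "CD (ru C a) = a" "DM (rui C a) = a" "CD (rui C a) = a \<odot> \<I>"
  "rui C a \<bullet> ru C a = idm (a \<odot> \<I>)" "ru C a \<bullet> rui C a = idm a"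
  using monoidal unfolding monoidal_def is_inverse_def hom_def by auto

lemmas iso_dom_cod[simp] = aso_iso(1-4) lu_iso(1-4) ru_iso(1-4)
lemmas iso_cancel[simp] = aso_iso(5,6) lu_iso(5,6) ru_iso(5,6)

lemma iso_cancel_comp[simp]:
  "CD r = a \<odot> (b \<odot> c) \<Longrightarrow> aso C a b c \<bullet> (asoi C a b c \<bullet> r) = r"
  "CD r = (a \<odot> b) \<odot> c \<Longrightarrow> asoi C a b c \<bullet> (aso C a b c \<bullet> r) = r"
  "CD r = a \<Longrightarrow> lu C a \<bullet> (lui C a \<bullet> r) = r"
  "CD r = \<I> \<odot> a \<Longrightarrow> lui C a \<bullet> (lu C a \<bullet> r) = r"
  "CD r = a \<Longrightarrow> ru C a \<bullet> (rui C a \<bullet> r) = r"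
  "CD r = a \<odot> \<I> \<Longrightarrow> rui C a \<bullet> (ru C a \<bullet> r) = r"
  by (simp_all flip: comp_assoc)

lemma aso_natural: "aso C (CD f) (CD g) (CD h) \<bullet> ((f \<otimes> g) \<otimes> h) = (f \<otimes> (g \<otimes> h)) \<bullet> aso C (DM f) (DM g) (DM h)"
  using monoidal unfolding monoidal_def by auto

lemma lu_natural: "lu C (CD f) \<bullet> (idm \<I> \<otimes> f) = f \<bullet> lu C (DM f)"
  using monoidal unfolding monoidal_def by auto

lemma ru_natural: "ru C (CD f) \<bullet> (f \<otimes> idm \<I>) = f \<bullet> ru C (DM f)"
  using monoidal unfolding monoidal_def by auto

lemma pentagon: "aso C a b (c \<odot> d) \<bullet> aso C (a \<odot> b) c d =
       (idm a \<otimes> aso C b c d) \<bullet> (aso C a (b \<odot> c) d \<bullet> (aso C a b c \<otimes> idm d))"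
  using monoidal unfolding monoidal_def by auto

lemma triangle: "(idm a \<otimes> lu C b) \<bullet> aso C a \<I> b = ru C a \<otimes> idm b"
  using monoidal unfolding monoidal_def by auto

lemma comp_eq_extend: "g \<bullet> f = k \<Longrightarrow> CD r = DM f \<Longrightarrow> CD f = DM g \<Longrightarrow> g \<bullet> (f \<bullet> r) = k \<bullet> r"
  by (metis comp_assoc)

lemma tensor_ident_right_comp: "CD f = DM g \<Longrightarrow> (g \<bullet> f) \<otimes> idm c = (g \<otimes> idm c) \<bullet> (f \<otimes> idm c)"
  by (metis cd_ident dm_ident comp_ident_left interchange)

lemma tensor_ident_left_comp: "CD f = DM g \<Longrightarrow> idm c \<otimes> (g \<bullet> f) = (idm c \<otimes> g) \<bullet> (idm c \<otimes> f)"
  by (metis cd_ident dm_ident comp_ident_left interchange)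

lemma tensor_comp: "CD f = DM g \<Longrightarrow> CD f' = DM g' \<Longrightarrow> (g \<otimes> g') \<bullet> (f \<otimes> f') = (g \<bullet> f) \<otimes> (g' \<bullet> f')"
  "CD f = DM g \<Longrightarrow> CD f' = DM g' \<Longrightarrow> CD r = DM f \<odot> DM f' \<Longrightarrow> (g \<otimes> g') \<bullet> ((f \<otimes> f') \<bullet> r) = ((g \<bullet> f) \<otimes> (g' \<bullet> f')) \<bullet> r"
  by (simp_all add: interchange flip: comp_assoc)

lemma tensor_unit_left_cancel: assumes "idm \<I> \<otimes> f = idm \<I> \<otimes> g" "DM f = DM g" "CD f = CD g" shows "f = g"
proof -
  have "f = (f \<bullet> lu C (DM f)) \<bullet> lui C (DM f)" by simp
  also have "\<dots> = (lu C (CD f) \<bullet> (idm \<I> \<otimes> f)) \<bullet> lui C (DM f)" by (simp only: lu_natural)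
  also have "\<dots> = (lu C (CD g) \<bullet> (idm \<I> \<otimes> g)) \<bullet> lui C (DM g)" using assms by simp
  also have "\<dots> = (g \<bullet> lu C (DM g)) \<bullet> lui C (DM g)" by (simp only: lu_natural)
  also have "\<dots> = g" by simp
  finally show ?thesis .
qed

lemma tensor_unit_right_cancel: assumes "f \<otimes> idm \<I> = g \<otimes> idm \<I>" "DM f = DM g" "CD f = CD g" shows "f = g"
proof -
  have "f = (f \<bullet> ru C (DM f)) \<bullet> rui C (DM f)" by simp
  also have "\<dots> = (ru C (CD f) \<bullet> (f \<otimes> idm \<I>)) \<bullet> rui C (DM f)" by (simp only: ru_natural)
  also have "\<dots> = (ru C (CD g) \<bullet> (g \<otimes> idm \<I>)) \<bullet> rui C (DM g)" using assms by simp
  also have "\<dots> = (g \<bullet> ru C (DM g)) \<bullet> rui C (DM g)" by (simp only: ru_natural)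
  also have "\<dots> = g" by simp
  finally show ?thesis .
qed

text \<open>Kelly's argument: after tensoring with \<open>\<I>\<close> on the left and precomposing with an
  isomorphism built from associators, pentagon and triangle turn both sides into the same morphism.\<close>

lemma lu_tensor: "lu C (a \<odot> b) \<bullet> aso C \<I> a b = lu C a \<otimes> idm b"
proof -
  let ?X = "aso C \<I> (\<I> \<odot> a) b \<bullet> (aso C \<I> \<I> a \<otimes> idm b)"
  let ?Y = "(asoi C \<I> \<I> a \<otimes> idm b) \<bullet> asoi C \<I> (\<I> \<odot> a) b"
  have L: "(idm \<I> \<otimes> (lu C (a \<odot> b) \<bullet> aso C \<I> a b)) \<bullet> ?X = aso C \<I> a b \<bullet> ((ru C \<I> \<otimes> idm a) \<otimes> idm b)"
  proof -
    have "(idm \<I> \<otimes> (lu C (a \<odot> b) \<bullet> aso C \<I> a b)) \<bullet> ?X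
       = (idm \<I> \<otimes> lu C (a \<odot> b)) \<bullet> ((idm \<I> \<otimes> aso C \<I> a b) \<bullet> ?X)"
      by (simp add: tensor_ident_left_comp)
    also have "\<dots> = (idm \<I> \<otimes> lu C (a \<odot> b)) \<bullet> (aso C \<I> \<I> (a \<odot> b) \<bullet> aso C (\<I> \<odot> \<I>) a b)"
      by (simp add: pentagon)
    also have "\<dots> = (ru C \<I> \<otimes> idm (a \<odot> b)) \<bullet> aso C (\<I> \<odot> \<I>) a b"
      by (simp flip: triangle)
    also have "\<dots> = aso C \<I> a b \<bullet> ((ru C \<I> \<otimes> idm a) \<otimes> idm b)"
      using aso_natural[of "ru C \<I>" "idm a" "idm b"] by simp
    finally show ?thesis .
  qed
  have R: "(idm \<I> \<otimes> (lu C a \<otimes> idm b)) \<bullet> ?X = aso C \<I> a b \<bullet> ((ru C \<I> \<otimes> idm a) \<otimes> idm b)"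
  proof -
    have "(idm \<I> \<otimes> (lu C a \<otimes> idm b)) \<bullet> ?X = aso C \<I> a b \<bullet> (((idm \<I> \<otimes> lu C a) \<otimes> idm b) \<bullet> (aso C \<I> \<I> a \<otimes> idm b))"
      using aso_natural[of "idm \<I>" "lu C a" "idm b"] by (simp flip: comp_assoc)
    also have "\<dots> = aso C \<I> a b \<bullet> ((ru C \<I> \<otimes> idm a) \<otimes> idm b)"
      by (simp flip: tensor_ident_right_comp add: triangle)
    finally show ?thesis .
  qed
  have "idm \<I> \<otimes> (lu C (a \<odot> b) \<bullet> aso C \<I> a b) = idm \<I> \<otimes> (lu C a \<otimes> idm b)"
  proof -
    have "idm \<I> \<otimes> (lu C (a \<odot> b) \<bullet> aso C \<I> a b) = ((idm \<I> \<otimes> (lu C (a \<odot> b) \<bullet> aso C \<I> a b)) \<bullet> ?X) \<bullet> ?Y"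
      by (simp add: tensor_comp)
    also have "\<dots> = ((idm \<I> \<otimes> (lu C a \<otimes> idm b)) \<bullet> ?X) \<bullet> ?Y" using L R by simp
    also have "\<dots> = idm \<I> \<otimes> (lu C a \<otimes> idm b)" by (simp add: tensor_comp)
    finally show ?thesis .
  qed
  thus ?thesis by (rule tensor_unit_left_cancel) simp_all
qed

lemma lu_tensor_asoi: "(lu C a \<otimes> idm b) \<bullet> asoi C \<I> a b = lu C (a \<odot> b)"
  by (simp flip: lu_tensor)

lemma ru_tensor: "(idm a \<otimes> ru C b) \<bullet> aso C a b \<I> = ru C (a \<odot> b)"
proof -
  have "aso C a b \<I> \<bullet> (ru C (a \<odot> b) \<otimes> idm \<I>) = aso C a b \<I> \<bullet> (((idm a \<otimes> ru C b) \<bullet> aso C a b \<I>) \<otimes> idm \<I>)"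
  proof -
    have "aso C a b \<I> \<bullet> (ru C (a \<odot> b) \<otimes> idm \<I>) = aso C a b \<I> \<bullet> ((idm (a \<odot> b) \<otimes> lu C \<I>) \<bullet> aso C (a \<odot> b) \<I> \<I>)"
      by (simp add: triangle)
    also have "\<dots> = (idm a \<otimes> (idm b \<otimes> lu C \<I>)) \<bullet> (aso C a b (\<I> \<odot> \<I>) \<bullet> aso C (a \<odot> b) \<I> \<I>)"
      using aso_natural[of "idm a" "idm b" "lu C \<I>"] by (simp flip: comp_assoc)
    also have "\<dots> = (idm a \<otimes> (idm b \<otimes> lu C \<I>)) \<bullet> ((idm a \<otimes> aso C b \<I> \<I>) \<bullet> (aso C a (b \<odot> \<I>) \<I> \<bullet> (aso C a b \<I> \<otimes> idm \<I>)))"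
      by (simp add: pentagon)
    also have "\<dots> = (idm a \<otimes> (ru C b \<otimes> idm \<I>)) \<bullet> (aso C a (b \<odot> \<I>) \<I> \<bullet> (aso C a b \<I> \<otimes> idm \<I>))"
      by (simp add: tensor_comp triangle flip: comp_assoc)
    also have "\<dots> = aso C a b \<I> \<bullet> (((idm a \<otimes> ru C b) \<otimes> idm \<I>) \<bullet> (aso C a b \<I> \<otimes> idm \<I>))"
      using aso_natural[of "idm a" "ru C b" "idm \<I>"] by (simp flip: comp_assoc)
    also have "\<dots> = aso C a b \<I> \<bullet> (((idm a \<otimes> ru C b) \<bullet> aso C a b \<I>) \<otimes> idm \<I>)"
      by (simp add: tensor_comp)
    finally show ?thesis .
  qed
  hence "asoi C a b \<I> \<bullet> (aso C a b \<I> \<bullet> (ru C (a \<odot> b) \<otimes> idm \<I>)) = asoi C a b \<I> \<bullet> (aso C a b \<I> \<bullet> (((idm a \<otimes> ru C b) \<bullet> aso C a b \<I>) \<otimes> idm \<I>))"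
    by simp
  hence "ru C (a \<odot> b) \<otimes> idm \<I> = ((idm a \<otimes> ru C b) \<bullet> aso C a b \<I>) \<otimes> idm \<I>" by simp
  thus ?thesis by (rule tensor_unit_right_cancel[symmetric]) simp_all
qed

lemma lu_unit_tensor: "lu C (\<I> \<odot> b) = idm \<I> \<otimes> lu C b"
proof -
  have "lu C (\<I> \<odot> b) = lui C b \<bullet> (lu C b \<bullet> lu C (\<I> \<odot> b))" by simp
  also have "\<dots> = lui C b \<bullet> (lu C b \<bullet> (idm \<I> \<otimes> lu C b))" using lu_natural[of "lu C b"] by simp
  also have "\<dots> = idm \<I> \<otimes> lu C b" by simp
  finally show ?thesis .
qed

lemma lu_unit_eq_ru_unit: "lu C \<I> = ru C \<I>"
proof -
  have "lu C \<I> \<otimes> idm \<I> = ru C \<I> \<otimes> idm \<I>"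
    using lu_tensor[of \<I> \<I>] triangle[of \<I> \<I>] by (simp add: lu_unit_tensor)
  thus ?thesis by (rule tensor_unit_right_cancel) simp_all
qed

lemma triangle_inv: "(ru C a \<otimes> idm b) \<bullet> asoi C a \<I> b = idm a \<otimes> lu C b"
proof -
  have "(ru C a \<otimes> idm b) \<bullet> asoi C a \<I> b = ((idm a \<otimes> lu C b) \<bullet> aso C a \<I> b) \<bullet> asoi C a \<I> b"
    by (simp only: triangle)
  thus ?thesis by simp
qed

lemma lui_unit_eq_rui_unit: "lui C \<I> = rui C \<I>"
proof -
  have "lui C \<I> = lui C \<I> \<bullet> (ru C \<I> \<bullet> rui C \<I>)" by simp
  also have "\<dots> = rui C \<I>" by (simp flip: lu_unit_eq_ru_unit)
  finally show ?thesis .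
qed

lemma asoi_natural: "asoi C (CD f) (CD g) (CD h) \<bullet> (f \<otimes> (g \<otimes> h)) = ((f \<otimes> g) \<otimes> h) \<bullet> asoi C (DM f) (DM g) (DM h)"
proof -
  have "asoi C (CD f) (CD g) (CD h) \<bullet> (f \<otimes> (g \<otimes> h)) = asoi C (CD f) (CD g) (CD h) \<bullet> (((f \<otimes> (g \<otimes> h)) \<bullet> aso C (DM f) (DM g) (DM h)) \<bullet> asoi C (DM f) (DM g) (DM h))"
    by simp
  also have "\<dots> = asoi C (CD f) (CD g) (CD h) \<bullet> ((aso C (CD f) (CD g) (CD h) \<bullet> ((f \<otimes> g) \<otimes> h)) \<bullet> asoi C (DM f) (DM g) (DM h))"
    by (simp only: aso_natural)
  also have "\<dots> = ((f \<otimes> g) \<otimes> h) \<bullet> asoi C (DM f) (DM g) (DM h)" by simp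
  finally show ?thesis .
qed

lemma lui_natural: "lui C (CD f) \<bullet> f = (idm \<I> \<otimes> f) \<bullet> lui C (DM f)"
proof -
  have "lui C (CD f) \<bullet> f = lui C (CD f) \<bullet> ((f \<bullet> lu C (DM f)) \<bullet> lui C (DM f))" by simp
  also have "\<dots> = lui C (CD f) \<bullet> ((lu C (CD f) \<bullet> (idm \<I> \<otimes> f)) \<bullet> lui C (DM f))"
    by (simp only: lu_natural)
  also have "\<dots> = (idm \<I> \<otimes> f) \<bullet> lui C (DM f)" by simp
  finally show ?thesis .
qed

lemma rui_natural: "rui C (CD f) \<bullet> f = (f \<otimes> idm \<I>) \<bullet> rui C (DM f)"
proof -
  have "rui C (CD f) \<bullet> f = rui C (CD f) \<bullet> ((f \<bullet> ru C (DM f)) \<bullet> rui C (DM f))" by simp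
  also have "\<dots> = rui C (CD f) \<bullet> ((ru C (CD f) \<bullet> (f \<otimes> idm \<I>)) \<bullet> rui C (DM f))"
    by (simp only: ru_natural)
  also have "\<dots> = (f \<otimes> idm \<I>) \<bullet> rui C (DM f)" by simp
  finally show ?thesis .
qed

lemma pentagon_inv: "asoi C (a \<odot> b) c d \<bullet> asoi C a b (c \<odot> d) =
       (asoi C a b c \<otimes> idm d) \<bullet> (asoi C a (b \<odot> c) d \<bullet> (idm a \<otimes> asoi C b c d))"
proof -
  let ?L = "asoi C (a \<odot> b) c d \<bullet> asoi C a b (c \<odot> d)"
  let ?R = "(asoi C a b c \<otimes> idm d) \<bullet> (asoi C a (b \<odot> c) d \<bullet> (idm a \<otimes> asoi C b c d))"
  have "?L = ?L \<bullet> ((idm a \<otimes> aso C b c d) \<bullet> (aso C a (b \<odot> c) d \<bullet> ((aso C a b c \<otimes> idm d) \<bullet> ?R)))"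
    by (simp add: tensor_comp)
  also have "\<dots> = ?L \<bullet> ((aso C a b (c \<odot> d) \<bullet> aso C (a \<odot> b) c d) \<bullet> ?R)"
    by (simp add: pentagon)
  also have "\<dots> = ?R" by simp
  finally show ?thesis by simp
qed

lemma pentagon_inv_comp: "CD r = a \<odot> (b \<odot> (c \<odot> d)) \<Longrightarrow> (asoi C a b c \<otimes> idm d) \<bullet> (asoi C a (b \<odot> c) d \<bullet> ((idm a \<otimes> asoi C b c d) \<bullet> r)) = asoi C (a \<odot> b) c d \<bullet> (asoi C a b (c \<odot> d) \<bullet> r)"
proof -
  assume r: "CD r = a \<odot> (b \<odot> (c \<odot> d))"
  have "asoi C (a \<odot> b) c d \<bullet> (asoi C a b (c \<odot> d) \<bullet> r) = (asoi C (a \<odot> b) c d \<bullet> asoi C a b (c \<odot> d)) \<bullet> r"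
    using r by simp
  also have "\<dots> = ((asoi C a b c \<otimes> idm d) \<bullet> (asoi C a (b \<odot> c) d \<bullet> (idm a \<otimes> asoi C b c d))) \<bullet> r"
    by (simp only: pentagon_inv)
  also have "\<dots> = (asoi C a b c \<otimes> idm d) \<bullet> (asoi C a (b \<odot> c) d \<bullet> ((idm a \<otimes> asoi C b c d) \<bullet> r))"
    using r by simp
  finally show ?thesis by simp
qed

lemma lui_tensor: "lui C (a \<odot> b) = aso C \<I> a b \<bullet> (lui C a \<otimes> idm b)"
proof -
  have "lui C (a \<odot> b) = aso C \<I> a b \<bullet> ((asoi C \<I> a b \<bullet> lui C (a \<odot> b)) \<bullet> (lu C a \<otimes> idm b)) \<bullet> (lui C a \<otimes> idm b)"
    by (simp add: tensor_comp)
  also have "\<dots> = aso C \<I> a b \<bullet> (lui C a \<otimes> idm b)"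
    by (simp flip: lu_tensor)
  finally show ?thesis .
qed

lemma rui_tensor: "rui C (a \<odot> b) = asoi C a b \<I> \<bullet> (idm a \<otimes> rui C b)"
proof -
  have "rui C (a \<odot> b) = asoi C a b \<I> \<bullet> ((idm a \<otimes> rui C b) \<bullet> (((idm a \<otimes> ru C b) \<bullet> aso C a b \<I>) \<bullet> rui C (a \<odot> b)))"
    by (simp add: tensor_comp)
  also have "\<dots> = asoi C a b \<I> \<bullet> ((idm a \<otimes> rui C b) \<bullet> (ru C (a \<odot> b) \<bullet> rui C (a \<odot> b)))"
    by (simp only: ru_tensor)
  also have "\<dots> = asoi C a b \<I> \<bullet> (idm a \<otimes> rui C b)" by simp
  finally show ?thesis .
qed

lemma asoi_lui_tensor: "asoi C \<I> a b \<bullet> lui C (a \<odot> b) = lui C a \<otimes> idm b"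
  by (simp add: lui_tensor)

lemma aso_rui_tensor: "aso C a b \<I> \<bullet> rui C (a \<odot> b) = idm a \<otimes> rui C b"
  by (simp add: rui_tensor)

end

locale braided_category =
  fixes C :: "('o,'m) bmcc"
  assumes braided: "braided C"

sublocale braided_category \<subseteq> monoidal_category
  using braided braided_def by unfold_locales auto

context braided_category
begin

lemma br_iso: "DM (br C a b) = a \<odot> b" "CD (br C a b) = b \<odot> a" "DM (bri C a b) = b \<odot> a" "CD (bri C a b) = a \<odot> b"
  "bri C a b \<bullet> br C a b = idm (a \<odot> b)" "br C a b \<bullet> bri C a b = idm (b \<odot> a)"
  using braided unfolding braided_def is_inverse_def hom_def by auto

lemmas br_dom_cod[simp] = br_iso(1-4)
lemmas br_cancel[simp] = br_iso(5,6)

lemma br_cancel_comp[simp]: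
  "CD r = a \<odot> b \<Longrightarrow> bri C a b \<bullet> (br C a b \<bullet> r) = r"
  "CD r = b \<odot> a \<Longrightarrow> br C a b \<bullet> (bri C a b \<bullet> r) = r"
  by (simp_all flip: comp_assoc)

lemma br_natural: "br C (CD f) (CD g) \<bullet> (f \<otimes> g) = (g \<otimes> f) \<bullet> br C (DM f) (DM g)"
  using braided unfolding braided_def by auto

lemma hexagon: "aso C b c a \<bullet> (br C a (b \<odot> c) \<bullet> aso C a b c) =
       (idm b \<otimes> br C a c) \<bullet> (aso C b a c \<bullet> (br C a b \<otimes> idm c))"
  using braided unfolding braided_def by auto

lemma lu_br_eq_ru: "lu C a \<bullet> br C a \<I> = ru C a"
proof -
  define u where "u = lu C a \<bullet> br C a \<I>"
  have [simp]: "DM u = a \<odot> \<I>" "CD u = a" unfolding u_def by simp_all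
  have "u \<bullet> (ru C a \<otimes> idm \<I>) = lu C a \<bullet> (br C a \<I> \<bullet> ((idm a \<otimes> lu C \<I>) \<bullet> aso C a \<I> \<I>))"
    unfolding u_def by (simp add: triangle)
  also have "\<dots> = lu C a \<bullet> ((lu C \<I> \<otimes> idm a) \<bullet> (br C a (\<I> \<odot> \<I>) \<bullet> aso C a \<I> \<I>))"
    using br_natural[of "idm a" "lu C \<I>"] by (simp flip: comp_assoc)
  also have "\<dots> = lu C a \<bullet> ((lu C \<I> \<otimes> idm a) \<bullet> (asoi C \<I> \<I> a \<bullet> (aso C \<I> \<I> a \<bullet> (br C a (\<I> \<odot> \<I>) \<bullet> aso C a \<I> \<I>))))"
    by simp
  also have "\<dots> = lu C a \<bullet> ((lu C \<I> \<otimes> idm a) \<bullet> (asoi C \<I> \<I> a \<bullet> ((idm \<I> \<otimes> br C a \<I>) \<bullet> (aso C \<I> a \<I> \<bullet> (br C a \<I> \<otimes> idm \<I>)))))"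
    by (simp add: hexagon)
  also have "\<dots> = lu C a \<bullet> (lu C (\<I> \<odot> a) \<bullet> ((idm \<I> \<otimes> br C a \<I>) \<bullet> (aso C \<I> a \<I> \<bullet> (br C a \<I> \<otimes> idm \<I>))))"
    by (simp flip: lu_tensor_asoi comp_assoc)
  also have "\<dots> = lu C a \<bullet> ((idm \<I> \<otimes> u) \<bullet> (aso C \<I> a \<I> \<bullet> (br C a \<I> \<otimes> idm \<I>)))"
    unfolding u_def lu_unit_tensor by (simp add: tensor_comp flip: comp_assoc)
  also have "\<dots> = u \<bullet> (lu C (a \<odot> \<I>) \<bullet> (aso C \<I> a \<I> \<bullet> (br C a \<I> \<otimes> idm \<I>)))"
    using lu_natural[of u] by (simp flip: comp_assoc)
  also have "\<dots> = u \<bullet> (u \<otimes> idm \<I>)"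
    unfolding u_def by (simp add: tensor_comp comp_eq_extend[OF lu_tensor])
  finally have eq: "u \<bullet> (ru C a \<otimes> idm \<I>) = u \<bullet> (u \<otimes> idm \<I>)" .
  have "ru C a \<otimes> idm \<I> = (bri C a \<I> \<bullet> lui C a) \<bullet> (u \<bullet> (ru C a \<otimes> idm \<I>))"
    unfolding u_def by simp
  also have "\<dots> = (bri C a \<I> \<bullet> lui C a) \<bullet> (u \<bullet> (u \<otimes> idm \<I>))" using eq by simp
  also have "\<dots> = u \<otimes> idm \<I>" unfolding u_def by simp
  finally have "ru C a \<otimes> idm \<I> = u \<otimes> idm \<I>" .
  hence "ru C a = u" by (rule tensor_unit_right_cancel) simp_all
  thus ?thesis unfolding u_def by simp
qed

lemma mid4_dom_cod[simp]: "DM (mid4 C a b) = (a \<odot> a) \<odot> (b \<odot> b)" "CD (mid4 C a b) = (a \<odot> b) \<odot> (a \<odot> b)"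
  unfolding mid4_def by simp_all

lemma br_unit: "br C a \<I> = lui C a \<bullet> ru C a"
proof -
  have "br C a \<I> = lui C a \<bullet> (lu C a \<bullet> br C a \<I>)" by simp
  thus ?thesis by (simp only: lu_br_eq_ru)
qed

end

section \<open>Integrals of a Hopf monoid\<close>

text \<open>The endomorphism object of a Hopf \<open>\<V>\<close>-category, with only the structure the argument uses:
  the left antipode identity and the left integral property at a single object.\<close>

locale hopf_monoid_left_integral = braided_category C for C :: "('o,'m) bmcc" +
  fixes H :: 'o and \<Delta> \<epsilon> \<mu> \<eta> S T :: 'm
  assumes dom_cod[simp]:
      "DM \<Delta> = H" "CD \<Delta> = H \<odot> H" "DM \<epsilon> = H" "CD \<epsilon> = \<I>"
      "DM \<mu> = H \<odot> H" "CD \<mu> = H" "DM \<eta> = \<I>" "CD \<eta> = H"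
      "DM S = H" "CD S = H" "DM T = \<I>" "CD T = H"
    and coassoc: "aso C H H H \<bullet> ((\<Delta> \<otimes> idm H) \<bullet> \<Delta>) = (idm H \<otimes> \<Delta>) \<bullet> \<Delta>"
    and counit_left: "lu C H \<bullet> ((\<epsilon> \<otimes> idm H) \<bullet> \<Delta>) = idm H"
    and counit_right: "ru C H \<bullet> ((idm H \<otimes> \<epsilon>) \<bullet> \<Delta>) = idm H"
    and mult_assoc: "\<mu> \<bullet> (\<mu> \<otimes> idm H) = \<mu> \<bullet> ((idm H \<otimes> \<mu>) \<bullet> aso C H H H)"
    and unit_left: "\<mu> \<bullet> (\<eta> \<otimes> idm H) = lu C H"
    and unit_right: "\<mu> \<bullet> (idm H \<otimes> \<eta>) = ru C H"
    and comult_mult: "\<Delta> \<bullet> \<mu> = (\<mu> \<otimes> \<mu>) \<bullet> (mid4 C H H \<bullet> (\<Delta> \<otimes> \<Delta>))"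
    and antipode_left: "\<mu> \<bullet> ((S \<otimes> idm H) \<bullet> \<Delta>) = \<eta> \<bullet> \<epsilon>"
    and left_integral: "\<mu> \<bullet> ((idm H \<otimes> T) \<bullet> rui C H) = T \<bullet> \<epsilon>"
begin

text \<open>In Sweedler notation \<open>act2 (h \<otimes> a \<otimes> b) = a \<otimes> h b\<close>, and \<open>\<tau> = t\<^sub>1 \<otimes> t\<^sub>2\<close>.\<close>

abbreviation "act2 \<equiv> (idm H \<otimes> \<mu>) \<bullet> (aso C H H H \<bullet> ((br C H H \<otimes> idm H) \<bullet> asoi C H H H))"
abbreviation "\<tau> \<equiv> \<Delta> \<bullet> T"

lemma comult_counit_right: "(idm H \<otimes> \<epsilon>) \<bullet> \<Delta> = rui C H"
proof -
  have "(idm H \<otimes> \<epsilon>) \<bullet> \<Delta> = rui C H \<bullet> (ru C H \<bullet> ((idm H \<otimes> \<epsilon>) \<bullet> \<Delta>))" by simp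
  also have "\<dots> = rui C H \<bullet> idm H" by (simp only: counit_right)
  finally show ?thesis by simp
qed

lemma comult_counit_left: "(\<epsilon> \<otimes> idm H) \<bullet> \<Delta> = lui C H"
proof -
  have "(\<epsilon> \<otimes> idm H) \<bullet> \<Delta> = lui C H \<bullet> (lu C H \<bullet> ((\<epsilon> \<otimes> idm H) \<bullet> \<Delta>))" by simp
  also have "\<dots> = lui C H \<bullet> idm H" by (simp only: counit_left)
  finally show ?thesis by simp
qed

lemma mult_tensor_mid4: "(\<mu> \<otimes> \<mu>) \<bullet> mid4 C H H = (\<mu> \<otimes> idm H) \<bullet> (asoi C H H H \<bullet> ((idm H \<otimes> act2) \<bullet> aso C H H (H \<odot> H)))"
proof -
  have 1: "(\<mu> \<otimes> \<mu>) \<bullet> asoi C H H (H \<odot> H) = (\<mu> \<otimes> idm H) \<bullet> (asoi C H H H \<bullet> (idm H \<otimes> (idm H \<otimes> \<mu>)))"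
    using asoi_natural[of "idm H" "idm H" \<mu>] by (simp add: tensor_comp)
  show ?thesis unfolding mid4_def by (simp add: comp_eq_extend[OF 1] tensor_comp)
qed

lemma aso_comult_tensor_tau: "aso C H H (H \<odot> H) \<bullet> ((\<Delta> \<otimes> \<tau>) \<bullet> rui C H) = (idm H \<otimes> ((idm H \<otimes> \<tau>) \<bullet> rui C H)) \<bullet> \<Delta>"
proof -
  have "aso C H H (H \<odot> H) \<bullet> ((\<Delta> \<otimes> \<tau>) \<bullet> rui C H) = aso C H H (H \<odot> H) \<bullet> (((idm H \<otimes> idm H) \<otimes> \<tau>) \<bullet> ((\<Delta> \<otimes> idm \<I>) \<bullet> rui C H))"
    by (simp add: tensor_comp)
  also have "\<dots> = aso C H H (H \<odot> H) \<bullet> (((idm H \<otimes> idm H) \<otimes> \<tau>) \<bullet> (rui C (H \<odot> H) \<bullet> \<Delta>))"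
    using rui_natural[of \<Delta>] by simp
  also have "\<dots> = (idm H \<otimes> (idm H \<otimes> \<tau>)) \<bullet> (aso C H H \<I> \<bullet> (rui C (H \<odot> H) \<bullet> \<Delta>))"
    using aso_natural[of "idm H" "idm H" \<tau>] by (simp flip: comp_assoc)
  also have "\<dots> = (idm H \<otimes> (idm H \<otimes> \<tau>)) \<bullet> ((idm H \<otimes> rui C H) \<bullet> \<Delta>)"
    by (simp add: rui_tensor)
  also have "\<dots> = (idm H \<otimes> ((idm H \<otimes> \<tau>) \<bullet> rui C H)) \<bullet> \<Delta>"
    by (simp add: tensor_comp)
  finally show ?thesis .
qed

lemma comult_mult_integral: "\<Delta> \<bullet> (\<mu> \<bullet> ((idm H \<otimes> T) \<bullet> rui C H)) = (\<mu> \<otimes> idm H) \<bullet> (asoi C H H H \<bullet> ((idm H \<otimes> (act2 \<bullet> ((idm H \<otimes> \<tau>) \<bullet> rui C H))) \<bullet> \<Delta>))"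
proof -
  have "\<Delta> \<bullet> (\<mu> \<bullet> ((idm H \<otimes> T) \<bullet> rui C H)) = (\<mu> \<otimes> \<mu>) \<bullet> (mid4 C H H \<bullet> ((\<Delta> \<otimes> \<Delta>) \<bullet> ((idm H \<otimes> T) \<bullet> rui C H)))"
    by (simp add: comp_eq_extend[OF comult_mult])
  also have "\<dots> = (\<mu> \<otimes> idm H) \<bullet> (asoi C H H H \<bullet> ((idm H \<otimes> act2) \<bullet> (aso C H H (H \<odot> H) \<bullet> ((\<Delta> \<otimes> \<tau>) \<bullet> rui C H))))"
    by (simp add: comp_eq_extend[OF mult_tensor_mid4] tensor_comp)
  also have "\<dots> = (\<mu> \<otimes> idm H) \<bullet> (asoi C H H H \<bullet> ((idm H \<otimes> (act2 \<bullet> ((idm H \<otimes> \<tau>) \<bullet> rui C H))) \<bullet> \<Delta>))"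
    by (simp add: aso_comult_tensor_tau tensor_comp)
  finally show ?thesis .
qed

lemma mult_assoc_inv: "\<mu> \<bullet> (idm H \<otimes> \<mu>) = \<mu> \<bullet> ((\<mu> \<otimes> idm H) \<bullet> asoi C H H H)"
proof -
  have "\<mu> \<bullet> ((\<mu> \<otimes> idm H) \<bullet> asoi C H H H) = (\<mu> \<bullet> (\<mu> \<otimes> idm H)) \<bullet> asoi C H H H" by simp
  also have "\<dots> = (\<mu> \<bullet> ((idm H \<otimes> \<mu>) \<bullet> aso C H H H)) \<bullet> asoi C H H H" by (simp only: mult_assoc)
  also have "\<dots> = \<mu> \<bullet> (idm H \<otimes> \<mu>)" by simp
  finally show ?thesis by simp
qed

lemma comult_assoc_inv: "asoi C H H H \<bullet> ((idm H \<otimes> \<Delta>) \<bullet> \<Delta>) = (\<Delta> \<otimes> idm H) \<bullet> \<Delta>"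
proof -
  have "asoi C H H H \<bullet> ((idm H \<otimes> \<Delta>) \<bullet> \<Delta>) = asoi C H H H \<bullet> (aso C H H H \<bullet> ((\<Delta> \<otimes> idm H) \<bullet> \<Delta>))"
    by (simp only: coassoc)
  thus ?thesis by simp
qed

lemma asoi_antipode_comult: "asoi C H H H \<bullet> ((S \<otimes> \<Delta>) \<bullet> \<Delta>) = ((S \<otimes> idm H) \<otimes> idm H) \<bullet> ((\<Delta> \<otimes> idm H) \<bullet> \<Delta>)"
proof -
  have "asoi C H H H \<bullet> ((S \<otimes> \<Delta>) \<bullet> \<Delta>) = asoi C H H H \<bullet> ((S \<otimes> idm (H \<odot> H)) \<bullet> ((idm H \<otimes> \<Delta>) \<bullet> \<Delta>))"
    by (simp add: tensor_comp)
  also have "\<dots> = ((S \<otimes> idm H) \<otimes> idm H) \<bullet> (asoi C H H H \<bullet> ((idm H \<otimes> \<Delta>) \<bullet> \<Delta>))"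
    using comp_eq_extend[OF asoi_natural[of S "idm H" "idm H"]] by simp
  also have "\<dots> = ((S \<otimes> idm H) \<otimes> idm H) \<bullet> ((\<Delta> \<otimes> idm H) \<bullet> \<Delta>)"
    by (simp only: comult_assoc_inv)
  finally show ?thesis .
qed

text \<open>\<open>S(h\<^sub>1) h\<^sub>2 F(h\<^sub>3)\<^sub>1 \<otimes> F(h\<^sub>3)\<^sub>2 = F(h)\<close>, from associativity, coassociativity and
  \<open>S(h\<^sub>1) h\<^sub>2 = \<epsilon>(h) 1\<close>.\<close>

lemma antipode_cancels_act1: assumes [simp]: "DM F = H" "CD F = H \<odot> H"
  shows "(\<mu> \<otimes> idm H) \<bullet> (asoi C H H H \<bullet> ((S \<otimes> ((\<mu> \<otimes> idm H) \<bullet> (asoi C H H H \<bullet> ((idm H \<otimes> F) \<bullet> \<Delta>)))) \<bullet> \<Delta>)) = F"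
proof -
  have "(\<mu> \<otimes> idm H) \<bullet> (asoi C H H H \<bullet> ((S \<otimes> ((\<mu> \<otimes> idm H) \<bullet> (asoi C H H H \<bullet> ((idm H \<otimes> F) \<bullet> \<Delta>)))) \<bullet> \<Delta>))
    = (\<mu> \<otimes> idm H) \<bullet> (asoi C H H H \<bullet> ((idm H \<otimes> (\<mu> \<otimes> idm H)) \<bullet> ((idm H \<otimes> asoi C H H H) \<bullet> ((idm H \<otimes> (idm H \<otimes> F)) \<bullet> ((S \<otimes> \<Delta>) \<bullet> \<Delta>)))))"
    by (simp add: tensor_comp)
  also have "\<dots> = (\<mu> \<otimes> idm H) \<bullet> (((idm H \<otimes> \<mu>) \<otimes> idm H) \<bullet> (asoi C H (H \<odot> H) H \<bullet> ((idm H \<otimes> asoi C H H H) \<bullet> ((idm H \<otimes> (idm H \<otimes> F)) \<bullet> ((S \<otimes> \<Delta>) \<bullet> \<Delta>)))))"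
    using comp_eq_extend[OF asoi_natural[of "idm H" \<mu> "idm H"]] by simp
  also have "\<dots> = ((\<mu> \<bullet> (idm H \<otimes> \<mu>)) \<otimes> idm H) \<bullet> (asoi C H (H \<odot> H) H \<bullet> ((idm H \<otimes> asoi C H H H) \<bullet> ((idm H \<otimes> (idm H \<otimes> F)) \<bullet> ((S \<otimes> \<Delta>) \<bullet> \<Delta>))))"
    by (simp add: tensor_comp)
  also have "\<dots> = ((\<mu> \<bullet> ((\<mu> \<otimes> idm H) \<bullet> asoi C H H H)) \<otimes> idm H) \<bullet> (asoi C H (H \<odot> H) H \<bullet> ((idm H \<otimes> asoi C H H H) \<bullet> ((idm H \<otimes> (idm H \<otimes> F)) \<bullet> ((S \<otimes> \<Delta>) \<bullet> \<Delta>))))"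
    by (simp only: mult_assoc_inv)
  also have "\<dots> = (\<mu> \<otimes> idm H) \<bullet> (((\<mu> \<otimes> idm H) \<otimes> idm H) \<bullet> ((asoi C H H H \<otimes> idm H) \<bullet> (asoi C H (H \<odot> H) H \<bullet> ((idm H \<otimes> asoi C H H H) \<bullet> ((idm H \<otimes> (idm H \<otimes> F)) \<bullet> ((S \<otimes> \<Delta>) \<bullet> \<Delta>))))))"
    by (simp add: tensor_comp)
  also have "\<dots> = (\<mu> \<otimes> idm H) \<bullet> (((\<mu> \<otimes> idm H) \<otimes> idm H) \<bullet> (asoi C (H \<odot> H) H H \<bullet> (asoi C H H (H \<odot> H) \<bullet> ((idm H \<otimes> (idm H \<otimes> F)) \<bullet> ((S \<otimes> \<Delta>) \<bullet> \<Delta>)))))"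
    by (simp add: pentagon_inv_comp)
  also have "\<dots> = (\<mu> \<otimes> idm H) \<bullet> (asoi C H H H \<bullet> ((\<mu> \<otimes> idm (H \<odot> H)) \<bullet> (asoi C H H (H \<odot> H) \<bullet> ((idm H \<otimes> (idm H \<otimes> F)) \<bullet> ((S \<otimes> \<Delta>) \<bullet> \<Delta>)))))"
    using comp_eq_extend[OF asoi_natural[of \<mu> "idm H" "idm H"]] by simp
  also have "\<dots> = (\<mu> \<otimes> idm H) \<bullet> (asoi C H H H \<bullet> ((\<mu> \<otimes> idm (H \<odot> H)) \<bullet> ((idm (H \<odot> H) \<otimes> F) \<bullet> (asoi C H H H \<bullet> ((S \<otimes> \<Delta>) \<bullet> \<Delta>)))))"
    using comp_eq_extend[OF asoi_natural[of "idm H" "idm H" F]] by simp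
  also have "\<dots> = (\<mu> \<otimes> idm H) \<bullet> (asoi C H H H \<bullet> ((\<mu> \<otimes> idm (H \<odot> H)) \<bullet> ((idm (H \<odot> H) \<otimes> F) \<bullet> (((S \<otimes> idm H) \<otimes> idm H) \<bullet> ((\<Delta> \<otimes> idm H) \<bullet> \<Delta>)))))"
    by (simp only: asoi_antipode_comult)
  also have "\<dots> = (\<mu> \<otimes> idm H) \<bullet> (asoi C H H H \<bullet> ((\<eta> \<otimes> F) \<bullet> ((\<epsilon> \<otimes> idm H) \<bullet> \<Delta>)))"
    by (simp add: tensor_comp antipode_left)
  also have "\<dots> = (\<mu> \<otimes> idm H) \<bullet> (asoi C H H H \<bullet> ((\<eta> \<otimes> F) \<bullet> lui C H))"
    by (simp only: comult_counit_left)
  also have "\<dots> = (\<mu> \<otimes> idm H) \<bullet> (asoi C H H H \<bullet> ((\<eta> \<otimes> idm (H \<odot> H)) \<bullet> ((idm \<I> \<otimes> F) \<bullet> lui C H)))"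
    by (simp add: tensor_comp)
  also have "\<dots> = (\<mu> \<otimes> idm H) \<bullet> (asoi C H H H \<bullet> ((\<eta> \<otimes> idm (H \<odot> H)) \<bullet> (lui C (H \<odot> H) \<bullet> F)))"
    using lui_natural[of F] by simp
  also have "\<dots> = (\<mu> \<otimes> idm H) \<bullet> (((\<eta> \<otimes> idm H) \<otimes> idm H) \<bullet> (asoi C \<I> H H \<bullet> (lui C (H \<odot> H) \<bullet> F)))"
    using comp_eq_extend[OF asoi_natural[of \<eta> "idm H" "idm H"]] by simp
  also have "\<dots> = (lu C H \<otimes> idm H) \<bullet> (asoi C \<I> H H \<bullet> (lui C (H \<odot> H) \<bullet> F))"
    by (simp add: tensor_comp unit_left)
  also have "\<dots> = F"
    using comp_eq_extend[OF lu_tensor_asoi[of H H]] by simp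
  finally show ?thesis .
qed

text \<open>\<open>S(h) t\<^sub>1 \<otimes> t\<^sub>2 = t\<^sub>1 \<otimes> h t\<^sub>2\<close>: expand \<open>\<Delta>(h t)\<close> in two ways, by the integral property and by
  multiplicativity of \<open>\<Delta>\<close>, and cancel \<open>h\<^sub>1\<close> with the antipode.\<close>

lemma antipode_integral_exchange: "(\<mu> \<otimes> idm H) \<bullet> (asoi C H H H \<bullet> ((S \<otimes> \<tau>) \<bullet> rui C H)) = act2 \<bullet> ((idm H \<otimes> \<tau>) \<bullet> rui C H)"
proof -
  let ?K = "(\<mu> \<otimes> idm H) \<bullet> (asoi C H H H \<bullet> ((S \<otimes> (\<Delta> \<bullet> (\<mu> \<bullet> ((idm H \<otimes> T) \<bullet> rui C H)))) \<bullet> \<Delta>))"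
  have "?K = (\<mu> \<otimes> idm H) \<bullet> (asoi C H H H \<bullet> ((S \<otimes> (\<Delta> \<bullet> (T \<bullet> \<epsilon>))) \<bullet> \<Delta>))"
    by (simp only: left_integral)
  also have "\<dots> = (\<mu> \<otimes> idm H) \<bullet> (asoi C H H H \<bullet> ((S \<otimes> \<tau>) \<bullet> ((idm H \<otimes> \<epsilon>) \<bullet> \<Delta>)))"
    by (simp add: tensor_comp)
  also have "\<dots> = (\<mu> \<otimes> idm H) \<bullet> (asoi C H H H \<bullet> ((S \<otimes> \<tau>) \<bullet> rui C H))"
    by (simp only: comult_counit_right)
  finally have 1: "?K = \<dots>" .
  have "?K = act2 \<bullet> ((idm H \<otimes> \<tau>) \<bullet> rui C H)"
    unfolding comult_mult_integral by (rule antipode_cancels_act1) simp_all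
  with 1 show ?thesis by simp
qed

lemma pairing_antipode_side:
  assumes [simp]: "DM f = H" "CD f = \<I>" "DM g = H" "CD g = \<I>"
    and normalised: "ru C H \<bullet> ((idm H \<otimes> f) \<bullet> (\<Delta> \<bullet> T)) = \<eta>"
  shows "lu C \<I> \<bullet> ((g \<otimes> f) \<bullet> ((\<mu> \<otimes> idm H) \<bullet> (asoi C H H H \<bullet> ((S \<otimes> \<tau>) \<bullet> rui C H)))) = g \<bullet> S"
proof -
  have Ft: "(idm H \<otimes> f) \<bullet> \<tau> = rui C H \<bullet> \<eta>"
  proof -
    have "(idm H \<otimes> f) \<bullet> \<tau> = rui C H \<bullet> (ru C H \<bullet> ((idm H \<otimes> f) \<bullet> (\<Delta> \<bullet> T)))" by simp
    thus ?thesis by (simp only: normalised)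
  qed
  have "lu C \<I> \<bullet> ((g \<otimes> f) \<bullet> ((\<mu> \<otimes> idm H) \<bullet> (asoi C H H H \<bullet> ((S \<otimes> \<tau>) \<bullet> rui C H))))
    = lu C \<I> \<bullet> (((g \<bullet> \<mu>) \<otimes> idm \<I>) \<bullet> ((idm (H \<odot> H) \<otimes> f) \<bullet> (asoi C H H H \<bullet> ((S \<otimes> \<tau>) \<bullet> rui C H))))"
    by (simp add: tensor_comp)
  also have "\<dots> = lu C \<I> \<bullet> (((g \<bullet> \<mu>) \<otimes> idm \<I>) \<bullet> (asoi C H H \<I> \<bullet> ((idm H \<otimes> (idm H \<otimes> f)) \<bullet> ((S \<otimes> \<tau>) \<bullet> rui C H))))"
    using comp_eq_extend[OF asoi_natural[of "idm H" "idm H" f, symmetric]] by simp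
  also have "\<dots> = lu C \<I> \<bullet> (((g \<bullet> \<mu>) \<otimes> idm \<I>) \<bullet> (asoi C H H \<I> \<bullet> ((S \<otimes> (rui C H \<bullet> \<eta>)) \<bullet> rui C H)))"
    by (simp add: tensor_comp Ft)
  also have "\<dots> = lu C \<I> \<bullet> (((g \<bullet> \<mu>) \<otimes> idm \<I>) \<bullet> (asoi C H H \<I> \<bullet> ((idm H \<otimes> rui C H) \<bullet> ((S \<otimes> \<eta>) \<bullet> rui C H))))"
    by (simp add: tensor_comp)
  also have "\<dots> = lu C \<I> \<bullet> (((g \<bullet> \<mu>) \<otimes> idm \<I>) \<bullet> (rui C (H \<odot> H) \<bullet> ((S \<otimes> \<eta>) \<bullet> rui C H)))"
    using comp_eq_extend[OF rui_tensor[of H H, symmetric]] by simp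
  also have "\<dots> = lu C \<I> \<bullet> (rui C \<I> \<bullet> ((g \<bullet> \<mu>) \<bullet> ((S \<otimes> \<eta>) \<bullet> rui C H)))"
    using comp_eq_extend[OF rui_natural[of "g \<bullet> \<mu>", symmetric]] by simp
  also have "\<dots> = g \<bullet> (\<mu> \<bullet> ((idm H \<otimes> \<eta>) \<bullet> ((S \<otimes> idm \<I>) \<bullet> rui C H)))"
    by (simp add: lu_unit_eq_ru_unit tensor_comp)
  also have "\<dots> = g \<bullet> (\<mu> \<bullet> ((idm H \<otimes> \<eta>) \<bullet> (rui C H \<bullet> S)))"
    using rui_natural[of S] by simp
  also have "\<dots> = g \<bullet> S"
    using comp_eq_extend[OF unit_right] by simp
  finally show ?thesis .
qed

lemma pairing_multiplication_side:
  assumes [simp]: "DM f = H" "CD f = \<I>" "DM g = H" "CD g = \<I>"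
    and normalised: "lu C H \<bullet> ((g \<otimes> idm H) \<bullet> (\<Delta> \<bullet> T)) = \<eta>"
  shows "lu C \<I> \<bullet> ((g \<otimes> f) \<bullet> (act2 \<bullet> ((idm H \<otimes> \<tau>) \<bullet> rui C H))) = f"
proof -
  have "lu C \<I> \<bullet> ((g \<otimes> f) \<bullet> (act2 \<bullet> ((idm H \<otimes> \<tau>) \<bullet> rui C H)))
    = lu C \<I> \<bullet> ((idm \<I> \<otimes> (f \<bullet> \<mu>)) \<bullet> ((g \<otimes> idm (H \<odot> H)) \<bullet> (aso C H H H \<bullet> ((br C H H \<otimes> idm H) \<bullet> (asoi C H H H \<bullet> ((idm H \<otimes> \<tau>) \<bullet> rui C H))))))"
    by (simp add: tensor_comp)
  also have "\<dots> = lu C \<I> \<bullet> ((idm \<I> \<otimes> (f \<bullet> \<mu>)) \<bullet> (aso C \<I> H H \<bullet> (((g \<otimes> idm H) \<otimes> idm H) \<bullet> ((br C H H \<otimes> idm H) \<bullet> (asoi C H H H \<bullet> ((idm H \<otimes> \<tau>) \<bullet> rui C H))))))"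
    using comp_eq_extend[OF aso_natural[of g "idm H" "idm H", symmetric]] by simp
  also have "\<dots> = lu C \<I> \<bullet> ((idm \<I> \<otimes> (f \<bullet> \<mu>)) \<bullet> (aso C \<I> H H \<bullet> (((br C H \<I> \<bullet> (idm H \<otimes> g)) \<otimes> idm H) \<bullet> (asoi C H H H \<bullet> ((idm H \<otimes> \<tau>) \<bullet> rui C H)))))"
    using br_natural[of "idm H" g, symmetric] by (simp add: tensor_comp)
  also have "\<dots> = lu C \<I> \<bullet> ((idm \<I> \<otimes> (f \<bullet> \<mu>)) \<bullet> (aso C \<I> H H \<bullet> ((lui C H \<otimes> idm H) \<bullet> ((ru C H \<otimes> idm H) \<bullet> (((idm H \<otimes> g) \<otimes> idm H) \<bullet> (asoi C H H H \<bullet> ((idm H \<otimes> \<tau>) \<bullet> rui C H)))))))"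
    by (simp add: tensor_comp br_unit)
  also have "\<dots> = lu C \<I> \<bullet> ((idm \<I> \<otimes> (f \<bullet> \<mu>)) \<bullet> (lui C (H \<odot> H) \<bullet> ((ru C H \<otimes> idm H) \<bullet> (((idm H \<otimes> g) \<otimes> idm H) \<bullet> (asoi C H H H \<bullet> ((idm H \<otimes> \<tau>) \<bullet> rui C H))))))"
    using comp_eq_extend[OF lui_tensor[of H H, symmetric]] by simp
  also have "\<dots> = f \<bullet> (\<mu> \<bullet> ((ru C H \<otimes> idm H) \<bullet> (((idm H \<otimes> g) \<otimes> idm H) \<bullet> (asoi C H H H \<bullet> ((idm H \<otimes> \<tau>) \<bullet> rui C H)))))"
    using comp_eq_extend[OF lui_natural[of "f \<bullet> \<mu>", symmetric]] by simp
  also have "\<dots> = f \<bullet> (\<mu> \<bullet> ((ru C H \<otimes> idm H) \<bullet> (asoi C H \<I> H \<bullet> ((idm H \<otimes> (g \<otimes> idm H)) \<bullet> ((idm H \<otimes> \<tau>) \<bullet> rui C H)))))"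
    using comp_eq_extend[OF asoi_natural[of "idm H" g "idm H", symmetric]] by simp
  also have "\<dots> = f \<bullet> (\<mu> \<bullet> ((idm H \<otimes> lu C H) \<bullet> ((idm H \<otimes> (g \<otimes> idm H)) \<bullet> ((idm H \<otimes> \<tau>) \<bullet> rui C H))))"
    using comp_eq_extend[OF triangle_inv[of H H]] by simp
  also have "\<dots> = f \<bullet> (\<mu> \<bullet> ((idm H \<otimes> \<eta>) \<bullet> rui C H))"
    by (simp add: tensor_comp normalised)
  also have "\<dots> = f" using comp_eq_extend[OF unit_right] by simp
  finally show ?thesis .
qed

lemma normalised_functionals_antipode:
  assumes [simp]: "DM f = H" "CD f = \<I>" "DM g = H" "CD g = \<I>"
    and "ru C H \<bullet> ((idm H \<otimes> f) \<bullet> (\<Delta> \<bullet> T)) = \<eta>"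
    and "lu C H \<bullet> ((g \<otimes> idm H) \<bullet> (\<Delta> \<bullet> T)) = \<eta>"
  shows "g \<bullet> S = f"
  using pairing_antipode_side[of f g] pairing_multiplication_side[of f g] assms
  by (simp add: antipode_integral_exchange)

lemma normalised_functional_unique:
  assumes "S \<bullet> Si = idm H" "DM Si = H" "CD Si = H"
    and "DM f = H" "CD f = \<I>" "DM g = H" "CD g = \<I>"
    and "ru C H \<bullet> ((idm H \<otimes> f) \<bullet> (\<Delta> \<bullet> T)) = \<eta>"
    and "lu C H \<bullet> ((g \<otimes> idm H) \<bullet> (\<Delta> \<bullet> T)) = \<eta>"
  shows "g = f \<bullet> Si"
proof -
  have "g = (g \<bullet> S) \<bullet> Si" using assms by simp
  also have "g \<bullet> S = f" using assms(4-) by (rule normalised_functionals_antipode)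
  finally show ?thesis .
qed

abbreviation "Hdual \<equiv> ih C H \<I>"

abbreviation "p_map \<equiv> lu C H \<bullet> ((ev C H \<I> \<otimes> idm H) \<bullet> (asoi C Hdual H H \<bullet> ((idm Hdual \<otimes> \<Delta>) \<bullet> ((idm Hdual \<otimes> T) \<bullet> rui C Hdual))))"
abbreviation "q_map \<equiv> ru C H \<bullet> ((idm H \<otimes> ev C H \<I>) \<bullet> ((idm H \<otimes> br C H Hdual) \<bullet> (aso C H H Hdual \<bullet> ((\<Delta> \<otimes> idm Hdual) \<bullet> ((T \<otimes> idm Hdual) \<bullet> lui C Hdual)))))"

context
  assumes ev_dom_cod[simp]: "DM (ev C H \<I>) = Hdual \<odot> H" "CD (ev C H \<I>) = \<I>"
begin

lemma p_map_right_inverse_normalised: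
  assumes [simp]: "DM pb = H" "CD pb = Hdual" and right_inv: "p_map \<bullet> pb = idm H"
  shows "lu C H \<bullet> (((ev C H \<I> \<bullet> ((pb \<otimes> idm H) \<bullet> ((\<eta> \<otimes> idm H) \<bullet> lui C H))) \<otimes> idm H) \<bullet> (\<Delta> \<bullet> T)) = \<eta>"
proof -
  have "\<eta> = ((lu C H \<bullet> ((ev C H \<I> \<otimes> idm H) \<bullet> (asoi C Hdual H H \<bullet> ((idm Hdual \<otimes> \<Delta>) \<bullet> ((idm Hdual \<otimes> T) \<bullet> rui C Hdual))))) \<bullet> pb) \<bullet> \<eta>"
    unfolding right_inv by simp
  also have "\<dots> = lu C H \<bullet> ((ev C H \<I> \<otimes> idm H) \<bullet> (asoi C Hdual H H \<bullet> ((idm Hdual \<otimes> \<Delta>) \<bullet> ((idm Hdual \<otimes> T) \<bullet> (rui C Hdual \<bullet> (pb \<bullet> \<eta>))))))"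
    by simp
  also have "\<dots> = lu C H \<bullet> ((ev C H \<I> \<otimes> idm H) \<bullet> (asoi C Hdual H H \<bullet> ((idm Hdual \<otimes> \<Delta>) \<bullet> ((idm Hdual \<otimes> T) \<bullet> (((pb \<bullet> \<eta>) \<otimes> idm \<I>) \<bullet> rui C \<I>)))))"
    using rui_natural[of "pb \<bullet> \<eta>"] by simp
  also have "\<dots> = lu C H \<bullet> ((ev C H \<I> \<otimes> idm H) \<bullet> (asoi C Hdual H H \<bullet> (((pb \<bullet> \<eta>) \<otimes> idm (H \<odot> H)) \<bullet> ((idm \<I> \<otimes> \<tau>) \<bullet> rui C \<I>))))"
    by (simp add: tensor_comp)
  also have "\<dots> = lu C H \<bullet> ((ev C H \<I> \<otimes> idm H) \<bullet> ((((pb \<bullet> \<eta>) \<otimes> idm H) \<otimes> idm H) \<bullet> (asoi C \<I> H H \<bullet> ((idm \<I> \<otimes> \<tau>) \<bullet> lui C \<I>))))"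
    using comp_eq_extend[OF asoi_natural[of "pb \<bullet> \<eta>" "idm H" "idm H"]] by (simp add: lui_unit_eq_rui_unit)
  also have "\<dots> = lu C H \<bullet> ((ev C H \<I> \<otimes> idm H) \<bullet> ((((pb \<bullet> \<eta>) \<otimes> idm H) \<otimes> idm H) \<bullet> (asoi C \<I> H H \<bullet> (lui C (H \<odot> H) \<bullet> \<tau>))))"
    using lui_natural[of \<tau>] by simp
  also have "\<dots> = lu C H \<bullet> ((ev C H \<I> \<otimes> idm H) \<bullet> ((((pb \<bullet> \<eta>) \<otimes> idm H) \<otimes> idm H) \<bullet> ((lui C H \<otimes> idm H) \<bullet> \<tau>)))"
    using comp_eq_extend[OF asoi_lui_tensor[of H H]] by simp
  also have "\<dots> = lu C H \<bullet> (((ev C H \<I> \<bullet> ((pb \<otimes> idm H) \<bullet> ((\<eta> \<otimes> idm H) \<bullet> lui C H))) \<otimes> idm H) \<bullet> (\<Delta> \<bullet> T))"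
    by (simp add: tensor_comp)
  finally show ?thesis by simp
qed

lemma q_map_right_inverse_normalised:
  assumes [simp]: "DM qb = H" "CD qb = Hdual" and right_inv: "q_map \<bullet> qb = idm H"
  shows "ru C H \<bullet> ((idm H \<otimes> (ev C H \<I> \<bullet> (br C H Hdual \<bullet> ((idm H \<otimes> qb) \<bullet> ((idm H \<otimes> \<eta>) \<bullet> rui C H))))) \<bullet> (\<Delta> \<bullet> T)) = \<eta>"
proof -
  have "\<eta> = ((ru C H \<bullet> ((idm H \<otimes> ev C H \<I>) \<bullet> ((idm H \<otimes> br C H Hdual) \<bullet> (aso C H H Hdual \<bullet> ((\<Delta> \<otimes> idm Hdual) \<bullet> ((T \<otimes> idm Hdual) \<bullet> lui C Hdual)))))) \<bullet> qb) \<bullet> \<eta>"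
    unfolding right_inv by simp
  also have "\<dots> = ru C H \<bullet> ((idm H \<otimes> ev C H \<I>) \<bullet> ((idm H \<otimes> br C H Hdual) \<bullet> (aso C H H Hdual \<bullet> ((\<Delta> \<otimes> idm Hdual) \<bullet> ((T \<otimes> idm Hdual) \<bullet> (lui C Hdual \<bullet> (qb \<bullet> \<eta>)))))))"
    by simp
  also have "\<dots> = ru C H \<bullet> ((idm H \<otimes> ev C H \<I>) \<bullet> ((idm H \<otimes> br C H Hdual) \<bullet> (aso C H H Hdual \<bullet> ((\<Delta> \<otimes> idm Hdual) \<bullet> ((T \<otimes> idm Hdual) \<bullet> ((idm \<I> \<otimes> (qb \<bullet> \<eta>)) \<bullet> lui C \<I>))))))"
    using lui_natural[of "qb \<bullet> \<eta>"] by simp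
  also have "\<dots> = ru C H \<bullet> ((idm H \<otimes> ev C H \<I>) \<bullet> ((idm H \<otimes> br C H Hdual) \<bullet> (aso C H H Hdual \<bullet> ((idm (H \<odot> H) \<otimes> (qb \<bullet> \<eta>)) \<bullet> ((\<tau> \<otimes> idm \<I>) \<bullet> lui C \<I>)))))"
    by (simp add: tensor_comp)
  also have "\<dots> = ru C H \<bullet> ((idm H \<otimes> ev C H \<I>) \<bullet> ((idm H \<otimes> br C H Hdual) \<bullet> ((idm H \<otimes> (idm H \<otimes> (qb \<bullet> \<eta>))) \<bullet> (aso C H H \<I> \<bullet> ((\<tau> \<otimes> idm \<I>) \<bullet> rui C \<I>)))))"
    using comp_eq_extend[OF aso_natural[of "idm H" "idm H" "qb \<bullet> \<eta>"]] by (simp add: lui_unit_eq_rui_unit)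
  also have "\<dots> = ru C H \<bullet> ((idm H \<otimes> ev C H \<I>) \<bullet> ((idm H \<otimes> br C H Hdual) \<bullet> ((idm H \<otimes> (idm H \<otimes> (qb \<bullet> \<eta>))) \<bullet> (aso C H H \<I> \<bullet> (rui C (H \<odot> H) \<bullet> \<tau>)))))"
    using rui_natural[of \<tau>] by simp
  also have "\<dots> = ru C H \<bullet> ((idm H \<otimes> ev C H \<I>) \<bullet> ((idm H \<otimes> br C H Hdual) \<bullet> ((idm H \<otimes> (idm H \<otimes> (qb \<bullet> \<eta>))) \<bullet> ((idm H \<otimes> rui C H) \<bullet> \<tau>))))"
    using comp_eq_extend[OF aso_rui_tensor[of H H]] by simp
  also have "\<dots> = ru C H \<bullet> ((idm H \<otimes> (ev C H \<I> \<bullet> (br C H Hdual \<bullet> ((idm H \<otimes> qb) \<bullet> ((idm H \<otimes> \<eta>) \<bullet> rui C H))))) \<bullet> (\<Delta> \<bullet> T))"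
    by (simp add: tensor_comp)
  finally show ?thesis by simp
qed

lemma right_inverse_functionals_antipode:
  assumes "S \<bullet> Si = idm H" "DM Si = H" "CD Si = H"
    and "DM pb = H" "CD pb = Hdual" "p_map \<bullet> pb = idm H"
    and "DM qb = H" "CD qb = Hdual" "q_map \<bullet> qb = idm H"
  shows "ev C H \<I> \<bullet> ((pb \<otimes> idm H) \<bullet> ((\<eta> \<otimes> idm H) \<bullet> lui C H)) =
         ev C H \<I> \<bullet> (br C H Hdual \<bullet> ((idm H \<otimes> qb) \<bullet> ((idm H \<otimes> \<eta>) \<bullet> (rui C H \<bullet> Si))))"
  using normalised_functional_unique[OF _ _ _ _ _ _ _
      q_map_right_inverse_normalised p_map_right_inverse_normalised] assms
  by simp

end

end

section \<open>Hopf \<V>-categories\<close>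

lemma endo_hom_hopf_monoid:
  assumes "braided C" "hopf C A m j dl ep s" "left_integral_family C A m ep t"
  shows "hopf_monoid_left_integral C (A x x) (dl x x) (ep x x) (m x x x) (j x) (s x x) (t x x)"
proof -
  interpret braided_category C by (rule braided_category.intro) fact
  have semi: "semi_hopf C A m j dl ep" and antipode: "\<forall>x y. hom C (s x y) (A x y) (A y x)"
    "\<forall>x y. m y x y \<bullet> ((s x y \<otimes> idm (A x y)) \<bullet> dl x y) = j y \<bullet> ep x y"
    using assms(2) unfolding hopf_def by auto
  have vcat: "vcat C A m j" and comonoid: "comonoid C (A x x) (dl x x) (ep x x)"
    and mult: "comonoid_mor C (m x x x) (A x x \<odot> A x x)
      (tens_comult C (A x x) (A x x) (dl x x) (dl x x)) (tens_counit C (ep x x) (ep x x))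
      (A x x) (dl x x) (ep x x)"
    using semi unfolding semi_hopf_def by auto
  show ?thesis
    using assms(1) comonoid vcat mult antipode assms(3)
    unfolding hopf_monoid_left_integral_def hopf_monoid_left_integral_axioms_def
      braided_category_def comonoid_def vcat_def comonoid_mor_def tens_comult_def
      left_integral_family_def hom_def
    by auto
qed

theorem mainTheorem3:
  fixes C :: "('o, 'm) bmcc"
    and A :: "'x \<Rightarrow> 'x \<Rightarrow> 'o"
    and m :: "'x \<Rightarrow> 'x \<Rightarrow> 'x \<Rightarrow> 'm"
    and j :: "'x \<Rightarrow> 'm"
    and dl ep s si t :: "'x \<Rightarrow> 'x \<Rightarrow> 'm"
    and x :: 'x
  assumes "braided C" and "closed C"
    and "hopf C A m j dl ep s"
    and "\<forall>y z. is_inverse C (s y z) (si y z) (A y z) (A z y)"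
    and "left_integral_family C A m ep t"
    and "nonsingular C A dl t"
  shows "(\<forall>f g. hom C f (A x x) (U C) \<and> hom C g (A x x) (U C) \<and>
            cp C (ru C (A x x)) (cp C (tm C (ident C (A x x)) f) (cp C (dl x x) (t x x))) = j x \<and>
            cp C (lu C (A x x)) (cp C (tm C g (ident C (A x x))) (cp C (dl x x) (t x x))) = j x
          \<longrightarrow> g = cp C f (si x x))
       \<and> (\<forall>pb qb. right_inverse C pb (pmap C A dl t x x) \<and> right_inverse C qb (qmap C A dl t x x)
          \<longrightarrow> cp C (ev C (A x x) (U C))
                (cp C (tm C pb (ident C (A x x)))
                  (cp C (tm C (j x) (ident C (A x x))) (lui C (A x x))))
            = cp C (ev C (A x x) (U C))
                (cp C (br C (A x x) (dual C (A x x)))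
                  (cp C (tm C (ident C (A x x)) qb)
                    (cp C (tm C (ident C (A x x)) (j x))
                      (cp C (rui C (A x x)) (si x x))))))"
proof -
  interpret hopf_monoid_left_integral C "A x x" "dl x x" "ep x x" "m x x x" "j x" "s x x" "t x x"
    using assms(1,3,5) by (rule endo_hom_hopf_monoid)
  have antipode_inv: "s x x \<bullet> si x x = idm (A x x)" "DM (si x x) = A x x" "CD (si x x) = A x x"
    using assms(4) unfolding is_inverse_def hom_def by auto
  have ev: "DM (ev C (A x x) \<I>) = Hdual \<odot> A x x" "CD (ev C (A x x) \<I>) = \<I>"
    using assms(2) unfolding closed_def hom_def by auto
  (* Non-singularity only guarantees that right inverses of p and q exist; the statement
     quantifies over them. *)
  show ?thesis
    apply (intro conjI allI impI; elim conjE)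
    subgoal for f g
      using antipode_inv by (intro normalised_functional_unique) (auto simp: hom_def)
    subgoal for pb qb
      unfolding dual_def using antipode_inv
      by (intro right_inverse_functionals_antipode[OF ev])
        (auto simp: ev right_inverse_def pmap_def qmap_def hom_def Let_def dual_def)
    done
qed

end
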